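(* $\mathsf{DT}^2_{4,2}$ implies $\mathsf{ER}^2$.
   Context: Implications are in the sense of reverse mathematics over $\mathsf{RCA}_0$. $\mathsf{DT}^2_{4,2}$: for every $f:[\mathbb Q]^2\to4$ there is $S\subseteq\mathbb Q$ such that $(S,<)$ is a dense linear order without endpoints and $|f([S]^2)|\le2$. $\mathsf{ER}^2$ (Erdős–Rado theorem): for every $f:[\mathbb Q]^2\to2$ there exists $S\subseteq\mathbb Q$ such that either $S$ is infinite and $f$ is constantly $0$ on $[S]^2$, or $(S,<)$ has order type $\mathbb Q$ and $f$ is constantly $1$ on $[S]^2$. *)

theory Defs
  imports Main
begin

text \<open>
  Reverse mathematics over RCA0, rendered semantically: by the completeness
  theorem, RCA0 proves (A implies B) iff every (Henkin) L2-structure that is a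
  model of RCA0 and satisfies A also satisfies B.
\<close>

record 'a l2 =
  n_dom  :: "'a set"
  s_dom  :: "'a set set"
  z_el   :: 'a
  o_el   :: 'a
  addM   :: "'a \<Rightarrow> 'a \<Rightarrow> 'a"
  mulM   :: "'a \<Rightarrow> 'a \<Rightarrow> 'a"
  lessM  :: "'a \<Rightarrow> 'a \<Rightarrow> bool"

datatype tm = V nat | Zt | Ot | Pl tm tm | Ti tm tm

datatype fm =
    Eq tm tm | Lt tm tm | In tm nat
  | Neg fm | Conj fm fm | Disj fm fm
  | BAll nat tm fm | BEx nat tm fm
  | All nat fm | Ex nat fm
  | SAll nat fm | SEx nat fm

fun vars_tm :: "tm \<Rightarrow> nat set" where
  "vars_tm (V i) = {i}"
| "vars_tm Zt = {}"
| "vars_tm Ot = {}"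
| "vars_tm (Pl s t) = vars_tm s \<union> vars_tm t"
| "vars_tm (Ti s t) = vars_tm s \<union> vars_tm t"

fun bounded :: "fm \<Rightarrow> bool" where
  "bounded (Eq s t) = True"
| "bounded (Lt s t) = True"
| "bounded (In t X) = True"
| "bounded (Neg p) = bounded p"
| "bounded (Conj p q) = (bounded p \<and> bounded q)"
| "bounded (Disj p q) = (bounded p \<and> bounded q)"
| "bounded (BAll x t p) = (x \<notin> vars_tm t \<and> bounded p)"
| "bounded (BEx x t p) = (x \<notin> vars_tm t \<and> bounded p)"
| "bounded (All x p) = False"
| "bounded (Ex x p) = False"
| "bounded (SAll X p) = False"
| "bounded (SEx X p) = False"

definition sigma01 :: "fm \<Rightarrow> bool" where
  "sigma01 p \<longleftrightarrow> (\<exists>x q. p = Ex x q \<and> bounded q)"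

definition pi01 :: "fm \<Rightarrow> bool" where
  "pi01 p \<longleftrightarrow> (\<exists>x q. p = All x q \<and> bounded q)"

fun evt :: "'a l2 \<Rightarrow> (nat \<Rightarrow> 'a) \<Rightarrow> tm \<Rightarrow> 'a" where
  "evt M v (V i) = v i"
| "evt M v Zt = z_el M"
| "evt M v Ot = o_el M"
| "evt M v (Pl s t) = addM M (evt M v s) (evt M v t)"
| "evt M v (Ti s t) = mulM M (evt M v s) (evt M v t)"

fun sat :: "'a l2 \<Rightarrow> (nat \<Rightarrow> 'a) \<Rightarrow> (nat \<Rightarrow> 'a set) \<Rightarrow> fm \<Rightarrow> bool" where
  "sat M v w (Eq s t) = (evt M v s = evt M v t)"
| "sat M v w (Lt s t) = lessM M (evt M v s) (evt M v t)"
| "sat M v w (In t X) = (evt M v t \<in> w X)"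
| "sat M v w (Neg p) = (\<not> sat M v w p)"
| "sat M v w (Conj p q) = (sat M v w p \<and> sat M v w q)"
| "sat M v w (Disj p q) = (sat M v w p \<or> sat M v w q)"
| "sat M v w (BAll x t p) =
     (\<forall>a\<in>n_dom M. lessM M a (evt M v t) \<longrightarrow> sat M (v(x := a)) w p)"
| "sat M v w (BEx x t p) =
     (\<exists>a\<in>n_dom M. lessM M a (evt M v t) \<and> sat M (v(x := a)) w p)"
| "sat M v w (All x p) = (\<forall>a\<in>n_dom M. sat M (v(x := a)) w p)"
| "sat M v w (Ex x p) = (\<exists>a\<in>n_dom M. sat M (v(x := a)) w p)"
| "sat M v w (SAll X p) = (\<forall>A\<in>s_dom M. sat M v (w(X := A)) p)"
| "sat M v w (SEx X p) = (\<exists>A\<in>s_dom M. sat M v (w(X := A)) p)"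

section \<open>Models of RCA0 (Simpson, SOSOA, Def. I.7.1 / II.1)\<close>

definition RCA0 :: "'a l2 \<Rightarrow> bool" where
  "RCA0 M \<longleftrightarrow>
    (let N = n_dom M; S = s_dom M; z = z_el M; one1 = o_el M;
         add = addM M; mul = mulM M; lt = lessM M in
     z \<in> N \<and> one1 \<in> N \<and>
     (\<forall>m\<in>N. \<forall>n\<in>N. add m n \<in> N \<and> mul m n \<in> N) \<and>
     (\<forall>A\<in>S. A \<subseteq> N) \<and>
     \<comment> \<open>basic axioms\<close>
     (\<forall>n\<in>N. add n one1 \<noteq> z) \<and>
     (\<forall>m\<in>N. \<forall>n\<in>N. add m one1 = add n one1 \<longrightarrow> m = n) \<and>
     (\<forall>m\<in>N. add m z = m) \<and>
     (\<forall>m\<in>N. \<forall>n\<in>N. add m (add n one1) = add (add m n) one1) \<and>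
     (\<forall>m\<in>N. mul m z = z) \<and>
     (\<forall>m\<in>N. \<forall>n\<in>N. mul m (add n one1) = add (mul m n) m) \<and>
     (\<forall>m\<in>N. \<not> lt m z) \<and>
     (\<forall>m\<in>N. \<forall>n\<in>N. lt m (add n one1) \<longleftrightarrow> (lt m n \<or> m = n)) \<and>
     \<comment> \<open>Sigma-0-1 induction (with arbitrary number and set parameters)\<close>
     (\<forall>p v w i. sigma01 p \<longrightarrow> (\<forall>j. v j \<in> N) \<longrightarrow> (\<forall>j. w j \<in> S) \<longrightarrow>
        sat M (v(i := z)) w p \<longrightarrow>
        (\<forall>n\<in>N. sat M (v(i := n)) w p \<longrightarrow> sat M (v(i := add n one1)) w p) \<longrightarrow>
        (\<forall>n\<in>N. sat M (v(i := n)) w p)) \<and>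
     \<comment> \<open>Delta-0-1 comprehension (with arbitrary parameters)\<close>
     (\<forall>p q v w i. sigma01 p \<longrightarrow> pi01 q \<longrightarrow> (\<forall>j. v j \<in> N) \<longrightarrow> (\<forall>j. w j \<in> S) \<longrightarrow>
        (\<forall>n\<in>N. sat M (v(i := n)) w p \<longleftrightarrow> sat M (v(i := n)) w q) \<longrightarrow>
        {n \<in> N. sat M (v(i := n)) w p} \<in> S))"

definition pairM :: "'a l2 \<Rightarrow> 'a \<Rightarrow> 'a \<Rightarrow> 'a" where
  "pairM M i j = addM M (mulM M (addM M i j) (addM M i j)) i"

fun numM :: "'a l2 \<Rightarrow> nat \<Rightarrow> 'a" where
  "numM M 0 = z_el M"
| "numM M (Suc k) = addM M (numM M k) (o_el M)"

definition dvdM :: "'a l2 \<Rightarrow> 'a \<Rightarrow> 'a \<Rightarrow> bool" where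
  "dvdM M d x \<longleftrightarrow> (\<exists>k\<in>n_dom M. mulM M d k = x)"

text \<open>A rational is coded by the triple \<open>\<langle>\<langle>a,b\<rangle>,c\<rangle>\<close> denoting (a-b)/c,
  with c > 0, a = 0 or b = 0, and (a+b) and c coprime (lowest terms).\<close>
definition QM :: "'a l2 \<Rightarrow> 'a set" where
  "QM M = {q \<in> n_dom M. \<exists>a\<in>n_dom M. \<exists>b\<in>n_dom M. \<exists>c\<in>n_dom M.
      q = pairM M (pairM M a b) c \<and> lessM M (z_el M) c \<and>
      (a = z_el M \<or> b = z_el M) \<and>
      (\<forall>d\<in>n_dom M. lessM M (o_el M) d \<longrightarrow> dvdM M d (addM M a b) \<longrightarrow> \<not> dvdM M d c)}"

text \<open>(a-b)/c < (a'-b')/c'  iff  a c' + b' c < a' c + b c'.\<close>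
definition qltM :: "'a l2 \<Rightarrow> 'a \<Rightarrow> 'a \<Rightarrow> bool" where
  "qltM M q q' \<longleftrightarrow> (\<exists>a\<in>n_dom M. \<exists>b\<in>n_dom M. \<exists>c\<in>n_dom M.
      \<exists>a'\<in>n_dom M. \<exists>b'\<in>n_dom M. \<exists>c'\<in>n_dom M.
      q = pairM M (pairM M a b) c \<and> q' = pairM M (pairM M a' b') c' \<and>
      lessM M (addM M (mulM M a c') (mulM M b' c)) (addM M (mulM M a' c) (mulM M b c')))"

text \<open>\<open>F\<close> (a set of the model) codes a function \<open>[\<rat>]\<^sup>2 \<rightarrow> k\<close>; the unordered
  pair {x,y} is represented by \<open>\<langle>x,y\<rangle>\<close> with x <_Q y; the value c is
  recorded as \<open>\<langle>\<langle>x,y\<rangle>,c\<rangle> \<in> F\<close>.\<close>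
definition colouring :: "'a l2 \<Rightarrow> nat \<Rightarrow> 'a set \<Rightarrow> bool" where
  "colouring M k F \<longleftrightarrow> F \<in> s_dom M \<and>
     (\<forall>p\<in>F. \<exists>x\<in>QM M. \<exists>y\<in>QM M. \<exists>c\<in>n_dom M. qltM M x y \<and>
        lessM M c (numM M k) \<and> p = pairM M (pairM M x y) c) \<and>
     (\<forall>x\<in>QM M. \<forall>y\<in>QM M. qltM M x y \<longrightarrow>
        (\<exists>c\<in>n_dom M. lessM M c (numM M k) \<and> pairM M (pairM M x y) c \<in> F)) \<and>
     (\<forall>x\<in>QM M. \<forall>y\<in>QM M. \<forall>c\<in>n_dom M. \<forall>c'\<in>n_dom M.
        pairM M (pairM M x y) c \<in> F \<longrightarrow> pairM M (pairM M x y) c' \<in> F \<longrightarrow> c = c')"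

definition dloM :: "'a l2 \<Rightarrow> 'a set \<Rightarrow> bool" where
  "dloM M X \<longleftrightarrow> X \<noteq> {} \<and>
     (\<forall>x\<in>X. \<exists>y\<in>X. qltM M y x) \<and> (\<forall>x\<in>X. \<exists>y\<in>X. qltM M x y) \<and>
     (\<forall>x\<in>X. \<forall>y\<in>X. qltM M x y \<longrightarrow> (\<exists>z\<in>X. qltM M x z \<and> qltM M z y))"

definition infiniteM :: "'a l2 \<Rightarrow> 'a set \<Rightarrow> bool" where
  "infiniteM M X \<longleftrightarrow> (\<forall>n\<in>n_dom M. \<exists>x\<in>X. lessM M n x)"

definition homog_col :: "'a l2 \<Rightarrow> 'a set \<Rightarrow> 'a set \<Rightarrow> 'a \<Rightarrow> bool" where
  "homog_col M F X c \<longleftrightarrow>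
     (\<forall>x\<in>X. \<forall>y\<in>X. qltM M x y \<longrightarrow> pairM M (pairM M x y) c \<in> F)"

definition DT2_4_2 :: "'a l2 \<Rightarrow> bool" where
  "DT2_4_2 M \<longleftrightarrow> (\<forall>F. colouring M 4 F \<longrightarrow>
     (\<exists>X\<in>s_dom M. X \<subseteq> QM M \<and> dloM M X \<and>
        (\<exists>c1\<in>n_dom M. \<exists>c2\<in>n_dom M. \<forall>x\<in>X. \<forall>y\<in>X. qltM M x y \<longrightarrow>
           pairM M (pairM M x y) c1 \<in> F \<or> pairM M (pairM M x y) c2 \<in> F)))"

definition ER2 :: "'a l2 \<Rightarrow> bool" where
  "ER2 M \<longleftrightarrow> (\<forall>F. colouring M 2 F \<longrightarrow>
     (\<exists>X\<in>s_dom M. X \<subseteq> QM M \<and>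
        ((infiniteM M X \<and> homog_col M F X (numM M 0)) \<or>
         (dloM M X \<and> homog_col M F X (numM M 1)))))"

end

theory Submission
  imports Defs
begin

(* Given a colouring f of pairs x <_Q y of codes of rationals, colour such a pair by f(x,y) if
   also x < y as numbers, and by f(x,y) + 2 otherwise.  DT^2_{4,2} yields a dense X on which this
   colouring takes at most two values.  Being dense without endpoints, X contains pairs on which
   the two orders agree and pairs on which they disagree, so f is constant, say a, on the
   agreeing pairs of X and constant, say d, on the disagreeing ones.  If a = d = 1, X is
   homogeneous for colour 1.  If a = 0, the records of X, the elements lying <_Q-above every
   element of X with a smaller code, form an infinite set on which the two orders agree, hence
   one homogeneous for colour 0; if d = 0, the same construction for >_Q gives an infinite set
   on which they disagree.  All sets involved are defined by bounded formulas, so the argument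
   runs inside any model of RCA0, whose arithmetic (semiring laws, pairing, the order of the
   rationals) is derived from Sigma01 induction first. *)

section \<open>Arithmetic in a model of RCA0\<close>

(* RCA0 alone does not make s_dom M nonempty; A0 is the value given to the set variables that
   a formula does not use. *)
locale rca0_model =
  fixes M :: "'a l2" and A0 :: "'a set"
  assumes RCA0: "RCA0 M" and A0_in: "A0 \<in> s_dom M"
begin

abbreviation N :: "'a set" where "N \<equiv> n_dom M"
abbreviation S :: "'a set set" where "S \<equiv> s_dom M"
abbreviation zero_M :: 'a ("\<zero>") where "\<zero> \<equiv> z_el M"
abbreviation one_M :: 'a ("\<one>") where "\<one> \<equiv> o_el M"
abbreviation add_M :: "'a \<Rightarrow> 'a \<Rightarrow> 'a" (infixl "\<oplus>" 65) where "x \<oplus> y \<equiv> addM M x y"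
abbreviation mul_M :: "'a \<Rightarrow> 'a \<Rightarrow> 'a" (infixl "\<otimes>" 70) where "x \<otimes> y \<equiv> mulM M x y"
abbreviation less_M :: "'a \<Rightarrow> 'a \<Rightarrow> bool" (infix "\<prec>" 50) where "x \<prec> y \<equiv> lessM M x y"
abbreviation le_M :: "'a \<Rightarrow> 'a \<Rightarrow> bool" (infix "\<preceq>" 50) where "x \<preceq> y \<equiv> x \<prec> y \<or> x = y"
abbreviation pair_M :: "'a \<Rightarrow> 'a \<Rightarrow> 'a" ("\<langle>_,_\<rangle>") where "\<langle>x,y\<rangle> \<equiv> pairM M x y"

lemma zero_in [simp]: "\<zero> \<in> N"
  and one_in [simp]: "\<one> \<in> N"
  and add_in [simp]: "m \<in> N \<Longrightarrow> n \<in> N \<Longrightarrow> m \<oplus> n \<in> N"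
  and mul_in [simp]: "m \<in> N \<Longrightarrow> n \<in> N \<Longrightarrow> m \<otimes> n \<in> N"
  and sets_subset: "A \<in> S \<Longrightarrow> A \<subseteq> N"
  and add_0_right: "m \<in> N \<Longrightarrow> m \<oplus> \<zero> = m"
  and add_succ_right: "m \<in> N \<Longrightarrow> n \<in> N \<Longrightarrow> m \<oplus> (n \<oplus> \<one>) = (m \<oplus> n) \<oplus> \<one>"
  and mul_0_right: "m \<in> N \<Longrightarrow> m \<otimes> \<zero> = \<zero>"
  and mul_succ_right: "m \<in> N \<Longrightarrow> n \<in> N \<Longrightarrow> m \<otimes> (n \<oplus> \<one>) = m \<otimes> n \<oplus> m"
  and not_less_zero: "m \<in> N \<Longrightarrow> \<not> m \<prec> \<zero>"
  and less_succ_iff: "m \<in> N \<Longrightarrow> n \<in> N \<Longrightarrow> m \<prec> n \<oplus> \<one> \<longleftrightarrow> m \<preceq> n"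
  using RCA0 unfolding RCA0_def Let_def by auto

lemma sigma01_induction:
  "sigma01 p \<Longrightarrow> \<forall>j. v j \<in> N \<Longrightarrow> \<forall>j. w j \<in> S \<Longrightarrow> sat M (v(i := \<zero>)) w p \<Longrightarrow>
    \<forall>n\<in>N. sat M (v(i := n)) w p \<longrightarrow> sat M (v(i := n \<oplus> \<one>)) w p \<Longrightarrow>
    n \<in> N \<Longrightarrow> sat M (v(i := n)) w p"
  using RCA0 unfolding RCA0_def Let_def by blast

lemma delta01_comprehension:
  "sigma01 p \<Longrightarrow> pi01 q \<Longrightarrow> \<forall>j. v j \<in> N \<Longrightarrow> \<forall>j. w j \<in> S \<Longrightarrow>
    \<forall>n\<in>N. sat M (v(i := n)) w p \<longleftrightarrow> sat M (v(i := n)) w q \<Longrightarrow>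
    {n \<in> N. sat M (v(i := n)) w p} \<in> S"
  using RCA0 unfolding RCA0_def Let_def by blast

lemma sigma_induct [consumes 1, case_names bounded params sets formula zero succ]:
  assumes "n \<in> N" "bounded q" "\<forall>j. v j \<in> N" "\<forall>j. w j \<in> S"
    and sem: "\<And>n. n \<in> N \<Longrightarrow> (\<exists>a\<in>N. sat M (v(i := n, k := a)) w q) \<longleftrightarrow> P n"
    and "P \<zero>" and "\<And>n. n \<in> N \<Longrightarrow> P n \<Longrightarrow> P (n \<oplus> \<one>)"
  shows "P n"
proof -
  have "sat M (v(i := n)) w (Ex k q)"
  proof (rule sigma01_induction)
    show "sigma01 (Ex k q)"
      using \<open>bounded q\<close> by (auto simp: sigma01_def)
  qed (use assms in \<open>simp_all add: sem\<close>)
  then show ?thesis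
    using sem \<open>n \<in> N\<close> by simp
qed

lemma bounded_induct [consumes 1, case_names bounded params sets formula zero succ]:
  assumes "n \<in> N" "bounded q" "\<forall>j. v j \<in> N" "\<forall>j. w j \<in> S"
    and sem: "\<And>n a. n \<in> N \<Longrightarrow> a \<in> N \<Longrightarrow> sat M (v(i := n, k := a)) w q \<longleftrightarrow> P n"
    and "P \<zero>" and "\<And>n. n \<in> N \<Longrightarrow> P n \<Longrightarrow> P (n \<oplus> \<one>)"
  shows "P n"
  using assms(1-4) _ assms(6,7) by (rule sigma_induct) (use sem zero_in in blast)

lemma bounded_comprehension:
  assumes "bounded q" "\<forall>j. v j \<in> N" "\<forall>j. w j \<in> S"
    and sem: "\<And>n a. n \<in> N \<Longrightarrow> a \<in> N \<Longrightarrow> sat M (v(i := n, k := a)) w q \<longleftrightarrow> P n"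
  shows "{n \<in> N. P n} \<in> S"
proof -
  have "{n \<in> N. sat M (v(i := n)) w (Ex k q)} \<in> S"
  proof (rule delta01_comprehension[where q="All k q"])
    show "sigma01 (Ex k q)" "pi01 (All k q)"
      using \<open>bounded q\<close> by (auto simp: sigma01_def pi01_def)
  qed (use assms(2,3) sem zero_in in auto)
  also have "{n \<in> N. sat M (v(i := n)) w (Ex k q)} = {n \<in> N. P n}"
    using sem zero_in by auto
  finally show ?thesis .
qed

(* Convention for the formulas below: variable 0 is the induction variable, variable 1 the
   unused witness of the Sigma01 form, and variables 2, 3, ... hold the parameters. *)
lemma arith_induct [consumes 1, case_names bounded params formula zero succ]:
  assumes "n \<in> N" "bounded q" "\<forall>j. v j \<in> N"
    and "\<And>n a. n \<in> N \<Longrightarrow> a \<in> N \<Longrightarrow> sat M (v(0 := n, 1 := a)) (\<lambda>_. A0) q \<longleftrightarrow> P n"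
    and "P \<zero>" and "\<And>n. n \<in> N \<Longrightarrow> P n \<Longrightarrow> P (n \<oplus> \<one>)"
  shows "P n"
  using assms(1) by (rule bounded_induct[where w="\<lambda>_. A0"]) (use assms A0_in in auto)

lemma less_succ: "m \<in> N \<Longrightarrow> m \<prec> m \<oplus> \<one>"
  using less_succ_iff by blast

lemma zero_le: "n \<in> N \<Longrightarrow> \<zero> \<preceq> n"
  by (induct n rule: arith_induct[where q="Disj (Lt Zt (V 0)) (Eq Zt (V 0))" and v="\<lambda>_. \<zero>"])
    (auto simp: less_succ_iff)

lemma succ_mono: assumes "m \<in> N" "n \<in> N" "m \<prec> n" shows "m \<oplus> \<one> \<prec> n \<oplus> \<one>"
  using assms(2,3)
  by (induct n rule: arith_induct[where q="Disj (Neg (Lt (V 2) (V 0))) (Lt (Pl (V 2) Ot) (Pl (V 0) Ot))"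
          and v="(\<lambda>_. \<zero>)(2 := m)"])
    (use assms(1) in \<open>auto simp: less_succ_iff not_less_zero\<close>)

lemma less_trans: assumes "a \<in> N" "b \<in> N" "c \<in> N" "a \<prec> b" "b \<prec> c" shows "a \<prec> c"
  using assms(3-5)
  by (induct c rule: arith_induct[where
        q="Disj (Neg (Lt (V 2) (V 3))) (Disj (Neg (Lt (V 3) (V 0))) (Lt (V 2) (V 0)))"
        and v="(\<lambda>_. \<zero>)(2 := a, 3 := b)"])
    (use assms(1,2) in \<open>auto simp: less_succ_iff not_less_zero\<close>)

lemma succ_less_succD: "m \<in> N \<Longrightarrow> n \<in> N \<Longrightarrow> m \<oplus> \<one> \<prec> n \<oplus> \<one> \<Longrightarrow> m \<prec> n"
  by (metis add_in one_in less_succ_iff less_trans)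

lemma less_irrefl: "n \<in> N \<Longrightarrow> \<not> n \<prec> n"
  by (induct n rule: arith_induct[where q="Neg (Lt (V 0) (V 0))" and v="\<lambda>_. \<zero>"])
    (auto simp: not_less_zero dest: succ_less_succD)

lemma less_linear: assumes "m \<in> N" "n \<in> N" shows "m \<prec> n \<or> m = n \<or> n \<prec> m"
  using assms(2)
proof (induct n rule: arith_induct[where
      q="Disj (Lt (V 2) (V 0)) (Disj (Eq (V 2) (V 0)) (Lt (V 0) (V 2)))" and v="(\<lambda>_. \<zero>)(2 := m)"])
  case (succ n)
  then show ?case
    using assms(1) by (metis add_in one_in less_succ_iff succ_mono)
qed (use assms(1) zero_le in auto)

lemma less_asym: "a \<in> N \<Longrightarrow> b \<in> N \<Longrightarrow> a \<prec> b \<Longrightarrow> \<not> b \<prec> a"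
  using less_trans less_irrefl by blast

lemma not_less: "a \<in> N \<Longrightarrow> b \<in> N \<Longrightarrow> \<not> a \<prec> b \<longleftrightarrow> b \<preceq> a"
  using less_linear less_asym less_irrefl by blast

lemma le_trans: "a \<in> N \<Longrightarrow> b \<in> N \<Longrightarrow> c \<in> N \<Longrightarrow> a \<preceq> b \<Longrightarrow> b \<preceq> c \<Longrightarrow> a \<preceq> c"
  and le_less_trans: "a \<in> N \<Longrightarrow> b \<in> N \<Longrightarrow> c \<in> N \<Longrightarrow> a \<preceq> b \<Longrightarrow> b \<prec> c \<Longrightarrow> a \<prec> c"
  and less_le_trans: "a \<in> N \<Longrightarrow> b \<in> N \<Longrightarrow> c \<in> N \<Longrightarrow> a \<prec> b \<Longrightarrow> b \<preceq> c \<Longrightarrow> a \<prec> c"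
  using less_trans by blast+

lemma zero_or_succ: assumes "n \<in> N" shows "n = \<zero> \<or> (\<exists>k\<in>N. n = k \<oplus> \<one>)"
proof -
  have "n = \<zero> \<or> (\<exists>k\<in>N. k \<prec> n \<and> n = k \<oplus> \<one>)"
    using assms
    by (induct n rule: arith_induct[where
          q="Disj (Eq (V 0) Zt) (BEx 2 (V 0) (Eq (V 0) (Pl (V 2) Ot)))" and v="\<lambda>_. \<zero>"])
      (use less_succ in auto)
  then show ?thesis by blast
qed

lemma less_iff_succ_le: "m \<in> N \<Longrightarrow> n \<in> N \<Longrightarrow> m \<prec> n \<longleftrightarrow> m \<oplus> \<one> \<preceq> n"
  by (metis add_in one_in less_succ_iff less_trans succ_mono)

lemma add_0_left [simp]: "n \<in> N \<Longrightarrow> \<zero> \<oplus> n = n"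
  by (induct n rule: arith_induct[where q="Eq (Pl Zt (V 0)) (V 0)" and v="\<lambda>_. \<zero>"])
    (auto simp: add_0_right add_succ_right)

lemma add_succ_left: assumes "m \<in> N" "n \<in> N" shows "(m \<oplus> \<one>) \<oplus> n = (m \<oplus> n) \<oplus> \<one>"
  using assms(2)
  by (induct n rule: arith_induct[where
        q="Eq (Pl (Pl (V 2) Ot) (V 0)) (Pl (Pl (V 2) (V 0)) Ot)" and v="(\<lambda>_. \<zero>)(2 := m)"])
    (use assms(1) in \<open>auto simp: add_0_right add_succ_right\<close>)

lemma add_commute: assumes "m \<in> N" "n \<in> N" shows "m \<oplus> n = n \<oplus> m"
  using assms(2)
  by (induct n rule: arith_induct[where q="Eq (Pl (V 2) (V 0)) (Pl (V 0) (V 2))" and v="(\<lambda>_. \<zero>)(2 := m)"])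
    (use assms(1) in \<open>auto simp: add_0_right add_succ_right add_succ_left\<close>)

lemma add_assoc: assumes "a \<in> N" "b \<in> N" "c \<in> N" shows "(a \<oplus> b) \<oplus> c = a \<oplus> (b \<oplus> c)"
  using assms(3)
  by (induct c rule: arith_induct[where
        q="Eq (Pl (Pl (V 2) (V 3)) (V 0)) (Pl (V 2) (Pl (V 3) (V 0)))" and v="(\<lambda>_. \<zero>)(2 := a, 3 := b)"])
    (use assms(1,2) in \<open>auto simp: add_0_right add_succ_right\<close>)

lemma add_left_commute: "a \<in> N \<Longrightarrow> b \<in> N \<Longrightarrow> c \<in> N \<Longrightarrow> a \<oplus> (b \<oplus> c) = b \<oplus> (a \<oplus> c)"
  by (metis add_assoc add_commute)

lemma add_less_mono: assumes "a \<in> N" "b \<in> N" "c \<in> N" "a \<prec> b" shows "a \<oplus> c \<prec> b \<oplus> c"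
  using assms(3,4)
  by (induct c rule: arith_induct[where
        q="Disj (Neg (Lt (V 2) (V 3))) (Lt (Pl (V 2) (V 0)) (Pl (V 3) (V 0)))"
        and v="(\<lambda>_. \<zero>)(2 := a, 3 := b)"])
    (use assms(1,2) in \<open>auto simp: add_0_right add_succ_right succ_mono\<close>)

lemma add_less_cancel: "a \<in> N \<Longrightarrow> b \<in> N \<Longrightarrow> c \<in> N \<Longrightarrow> a \<oplus> c \<prec> b \<oplus> c \<longleftrightarrow> a \<prec> b"
  by (metis add_less_mono add_in less_asym less_irrefl less_linear)

lemma add_cancel: "a \<in> N \<Longrightarrow> b \<in> N \<Longrightarrow> c \<in> N \<Longrightarrow> a \<oplus> c = b \<oplus> c \<longleftrightarrow> a = b"
  by (metis add_less_mono add_in less_irrefl less_linear)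

lemma add_cancel_left: "a \<in> N \<Longrightarrow> b \<in> N \<Longrightarrow> c \<in> N \<Longrightarrow> c \<oplus> a = c \<oplus> b \<longleftrightarrow> a = b"
  by (metis add_cancel add_commute)

lemma le_add: assumes "a \<in> N" "b \<in> N" shows "a \<preceq> a \<oplus> b"
  using assms(2)
  by (induct b rule: arith_induct[where
        q="Disj (Lt (V 2) (Pl (V 2) (V 0))) (Eq (V 2) (Pl (V 2) (V 0)))" and v="(\<lambda>_. \<zero>)(2 := a)"])
    (use assms(1) in \<open>auto simp: add_0_right add_succ_right less_succ_iff\<close>)

lemma le_add2: "a \<in> N \<Longrightarrow> b \<in> N \<Longrightarrow> a \<preceq> b \<oplus> a"
  using le_add add_commute by metis

lemma add_le_mono:
  "u \<in> N \<Longrightarrow> v \<in> N \<Longrightarrow> u' \<in> N \<Longrightarrow> v' \<in> N \<Longrightarrow> u \<preceq> v \<Longrightarrow> u' \<preceq> v' \<Longrightarrow> u \<oplus> u' \<preceq> v \<oplus> v'"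
  and add_le_less_mono:
  "u \<in> N \<Longrightarrow> v \<in> N \<Longrightarrow> u' \<in> N \<Longrightarrow> v' \<in> N \<Longrightarrow> u \<preceq> v \<Longrightarrow> u' \<prec> v' \<Longrightarrow> u \<oplus> u' \<prec> v \<oplus> v'"
  by (smt (verit) add_commute add_less_mono add_in less_trans)+

lemma mul_0_left [simp]: "n \<in> N \<Longrightarrow> \<zero> \<otimes> n = \<zero>"
  by (induct n rule: arith_induct[where q="Eq (Ti Zt (V 0)) Zt" and v="\<lambda>_. \<zero>"])
    (auto simp: add_0_right mul_0_right mul_succ_right)

lemma mul_succ_left: assumes "m \<in> N" "n \<in> N" shows "(m \<oplus> \<one>) \<otimes> n = m \<otimes> n \<oplus> n"
  using assms(2)
  by (induct n rule: arith_induct[where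
        q="Eq (Ti (Pl (V 2) Ot) (V 0)) (Pl (Ti (V 2) (V 0)) (V 0))" and v="(\<lambda>_. \<zero>)(2 := m)"])
    (use assms(1) in \<open>auto simp: add_0_right mul_0_right mul_succ_right add_succ_right add_assoc add_left_commute add_commute\<close>)

lemma mul_commute: assumes "m \<in> N" "n \<in> N" shows "m \<otimes> n = n \<otimes> m"
  using assms(2)
  by (induct n rule: arith_induct[where q="Eq (Ti (V 2) (V 0)) (Ti (V 0) (V 2))" and v="(\<lambda>_. \<zero>)(2 := m)"])
    (use assms(1) in \<open>auto simp: mul_0_right mul_succ_right mul_succ_left\<close>)

lemma distrib_left: assumes "a \<in> N" "b \<in> N" "c \<in> N" shows "a \<otimes> (b \<oplus> c) = a \<otimes> b \<oplus> a \<otimes> c"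
  using assms(3)
proof (induct c rule: arith_induct[where
      q="Eq (Ti (V 2) (Pl (V 3) (V 0))) (Pl (Ti (V 2) (V 3)) (Ti (V 2) (V 0)))"
      and v="(\<lambda>_. \<zero>)(2 := a, 3 := b)"])
  case (succ c)
  then have "a \<otimes> (b \<oplus> (c \<oplus> \<one>)) = (a \<otimes> b \<oplus> a \<otimes> c) \<oplus> a"
    using assms(1,2) by (simp add: add_succ_right mul_succ_right)
  then show ?case
    using succ.hyps assms(1,2) by (simp add: add_assoc mul_succ_right)
qed (use assms(1,2) in \<open>auto simp: add_0_right mul_0_right\<close>)

lemma distrib_right: "a \<in> N \<Longrightarrow> b \<in> N \<Longrightarrow> c \<in> N \<Longrightarrow> (b \<oplus> c) \<otimes> a = b \<otimes> a \<oplus> c \<otimes> a"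
  using distrib_left[of a b c] mul_commute[of a] by simp

lemma mul_1_right [simp]: "a \<in> N \<Longrightarrow> a \<otimes> \<one> = a"
  using mul_succ_right[of a \<zero>] by (simp add: mul_0_right)

lemma mul_assoc: assumes "a \<in> N" "b \<in> N" "c \<in> N" shows "(a \<otimes> b) \<otimes> c = a \<otimes> (b \<otimes> c)"
  using assms(3)
  by (induct c rule: arith_induct[where
        q="Eq (Ti (Ti (V 2) (V 3)) (V 0)) (Ti (V 2) (Ti (V 3) (V 0)))" and v="(\<lambda>_. \<zero>)(2 := a, 3 := b)"])
    (use assms(1,2) in \<open>auto simp: mul_0_right mul_succ_right distrib_left\<close>)

lemma mul_left_commute: "a \<in> N \<Longrightarrow> b \<in> N \<Longrightarrow> c \<in> N \<Longrightarrow> a \<otimes> (b \<otimes> c) = b \<otimes> (a \<otimes> c)"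
  using mul_assoc[of a b c] mul_assoc[of b a c] mul_commute[of a b] by simp

lemma mul_le_mono: assumes "a \<in> N" "b \<in> N" "c \<in> N" "a \<preceq> b" shows "a \<otimes> c \<preceq> b \<otimes> c"
  using assms(3,4)
  by (induct c rule: arith_induct[where
        q="Disj (Neg (Disj (Lt (V 2) (V 3)) (Eq (V 2) (V 3))))
             (Disj (Lt (Ti (V 2) (V 0)) (Ti (V 3) (V 0))) (Eq (Ti (V 2) (V 0)) (Ti (V 3) (V 0))))"
        and v="(\<lambda>_. \<zero>)(2 := a, 3 := b)"])
    (use assms(1,2) add_le_mono in \<open>auto simp: mul_0_right mul_succ_right\<close>)

lemma mul_less_mono:
  assumes "a \<in> N" "b \<in> N" "c \<in> N" "a \<prec> b" "\<zero> \<prec> c" shows "a \<otimes> c \<prec> b \<otimes> c"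
proof -
  obtain k where k: "k \<in> N" "c = k \<oplus> \<one>"
    using zero_or_succ assms(3,5) less_irrefl by blast
  have "a \<otimes> k \<preceq> b \<otimes> k"
    using mul_le_mono assms k by blast
  then have "a \<otimes> k \<oplus> a \<prec> b \<otimes> k \<oplus> b"
    using add_le_less_mono assms k by simp
  then show ?thesis
    using k assms by (simp add: mul_succ_right)
qed

lemma mul_less_cancel: "a \<in> N \<Longrightarrow> b \<in> N \<Longrightarrow> c \<in> N \<Longrightarrow> \<zero> \<prec> c \<Longrightarrow> a \<otimes> c \<prec> b \<otimes> c \<longleftrightarrow> a \<prec> b"
  and mul_le_cancel: "a \<in> N \<Longrightarrow> b \<in> N \<Longrightarrow> c \<in> N \<Longrightarrow> \<zero> \<prec> c \<Longrightarrow> a \<otimes> c \<preceq> b \<otimes> c \<longleftrightarrow> a \<preceq> b"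
  by (metis mul_in mul_less_mono mul_le_mono not_less)+

lemma less_add_succ: assumes "x \<in> N" "y \<in> N" shows "x \<prec> x \<oplus> (y \<oplus> \<one>)"
proof -
  have "x \<preceq> x \<oplus> y" "x \<oplus> y \<prec> (x \<oplus> y) \<oplus> \<one>"
    using le_add less_succ assms by simp_all
  then show ?thesis
    using le_less_trans[of x "x \<oplus> y" "(x \<oplus> y) \<oplus> \<one>"] assms by (simp add: add_succ_right)
qed

lemma less_add_two: "c \<in> N \<Longrightarrow> c \<prec> c \<oplus> \<one> \<oplus> \<one>"
  using less_succ[of c] less_succ[of "c \<oplus> \<one>"] less_trans[of c "c \<oplus> \<one>" "c \<oplus> \<one> \<oplus> \<one>"] by simp

section \<open>Pairing, numerals and the order of the rationals\<close>

lemma pair_in [simp]: "i \<in> N \<Longrightarrow> j \<in> N \<Longrightarrow> \<langle>i,j\<rangle> \<in> N"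
  by (simp add: pairM_def)

lemma le_pair_fst: "i \<in> N \<Longrightarrow> j \<in> N \<Longrightarrow> i \<preceq> \<langle>i,j\<rangle>"
  unfolding pairM_def using le_add2 by simp

lemma le_square: assumes "s \<in> N" shows "s \<preceq> s \<otimes> s"
  using zero_or_succ[OF assms]
proof
  assume "\<exists>k\<in>N. s = k \<oplus> \<one>"
  then obtain k where k: "k \<in> N" "s = k \<oplus> \<one>" by blast
  then have "\<one> \<preceq> s"
    using add_le_mono[of \<zero> k \<one> \<one>] zero_le[of k] by simp
  then have "\<one> \<otimes> s \<preceq> s \<otimes> s"
    using mul_le_mono[of \<one> s s] assms by simp
  then show ?thesis
    using mul_commute[of \<one> s] assms by simp
qed (simp add: mul_0_right)

lemma le_pair_snd: assumes "i \<in> N" "j \<in> N" shows "j \<preceq> \<langle>i,j\<rangle>"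
proof -
  have "j \<preceq> i \<oplus> j" "i \<oplus> j \<preceq> (i \<oplus> j) \<otimes> (i \<oplus> j)" "(i \<oplus> j) \<otimes> (i \<oplus> j) \<preceq> \<langle>i,j\<rangle>"
    using le_add2 le_square le_add assms unfolding pairM_def by simp_all
  then show ?thesis
    using assms le_trans[of j "i \<oplus> j" "(i \<oplus> j) \<otimes> (i \<oplus> j)"]
      le_trans[of j "(i \<oplus> j) \<otimes> (i \<oplus> j)" "\<langle>i,j\<rangle>"] by simp
qed

lemma square_mono: assumes "a \<in> N" "b \<in> N" "a \<preceq> b" shows "a \<otimes> a \<preceq> b \<otimes> b"
proof -
  have "a \<otimes> a \<preceq> b \<otimes> a" "a \<otimes> b \<preceq> b \<otimes> b"
    using mul_le_mono assms by simp_all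
  then show ?thesis
    using mul_commute[of a b] assms le_trans[of "a \<otimes> a" "b \<otimes> a" "b \<otimes> b"] by simp
qed

lemma le_triple:
  assumes "a \<in> N" "b \<in> N" "c \<in> N"
  shows "a \<preceq> \<langle>\<langle>a,b\<rangle>,c\<rangle>" "b \<preceq> \<langle>\<langle>a,b\<rangle>,c\<rangle>" "c \<preceq> \<langle>\<langle>a,b\<rangle>,c\<rangle>"
  using le_pair_fst le_pair_snd le_trans assms by (metis pair_in)+

lemma pair_components_less: "i \<in> N \<Longrightarrow> j \<in> N \<Longrightarrow> i \<prec> \<langle>i,j\<rangle> \<oplus> \<one> \<and> j \<prec> \<langle>i,j\<rangle> \<oplus> \<one>"
  using le_pair_fst le_pair_snd less_succ_iff by simp

lemma triple_components_less:
  assumes "x \<in> N" "y \<in> N" "c \<in> N"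
  shows "x \<prec> \<langle>\<langle>x,y\<rangle>,c\<rangle> \<oplus> \<one> \<and> y \<prec> \<langle>\<langle>x,y\<rangle>,c\<rangle> \<oplus> \<one> \<and> c \<prec> \<langle>\<langle>x,y\<rangle>,c\<rangle> \<oplus> \<one>"
  using le_triple[OF assms] less_succ_iff assms by simp

lemma pair_less_pair:
  assumes N: "i \<in> N" "j \<in> N" "i' \<in> N" "j' \<in> N" and less: "i \<oplus> j \<prec> i' \<oplus> j'"
  shows "\<langle>i,j\<rangle> \<prec> \<langle>i',j'\<rangle>"
proof -
  define s s' where "s = i \<oplus> j" and "s' = i' \<oplus> j'"
  have sN: "s \<in> N" "s' \<in> N"
    using N by (simp_all add: s_def s'_def)
  have "s \<otimes> s \<oplus> i \<preceq> s \<otimes> s \<oplus> s"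
    using add_le_mono[of "s \<otimes> s" "s \<otimes> s" i s] le_add[of i j] sN N s_def by simp
  moreover have "s \<otimes> s \<oplus> s \<prec> (s \<oplus> \<one>) \<otimes> (s \<oplus> \<one>)"
  proof -
    have "(s \<oplus> \<one>) \<otimes> (s \<oplus> \<one>) = (s \<otimes> s \<oplus> s) \<oplus> (s \<oplus> \<one>)"
      using sN by (simp add: mul_succ_right mul_succ_left add_assoc)
    moreover have "s \<otimes> s \<oplus> s \<prec> (s \<otimes> s \<oplus> s) \<oplus> (s \<oplus> \<one>)"
      using less_add_succ sN by simp
    ultimately show ?thesis by simp
  qed
  moreover have "(s \<oplus> \<one>) \<otimes> (s \<oplus> \<one>) \<preceq> s' \<otimes> s'"
    using square_mono less_iff_succ_le[of s s'] less sN by (simp add: s_def s'_def)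
  moreover have "s' \<otimes> s' \<preceq> s' \<otimes> s' \<oplus> i'"
    using le_add sN N by simp
  ultimately have "s \<otimes> s \<oplus> i \<prec> s' \<otimes> s' \<oplus> i'"
    using sN N le_less_trans[of "s \<otimes> s \<oplus> i" "s \<otimes> s \<oplus> s" "(s \<oplus> \<one>) \<otimes> (s \<oplus> \<one>)"]
      less_le_trans[of "s \<otimes> s \<oplus> i" "(s \<oplus> \<one>) \<otimes> (s \<oplus> \<one>)" "s' \<otimes> s' \<oplus> i'"]
      le_trans[of "(s \<oplus> \<one>) \<otimes> (s \<oplus> \<one>)" "s' \<otimes> s'" "s' \<otimes> s' \<oplus> i'"]
    by simp
  then show ?thesis
    unfolding pairM_def s_def s'_def .
qed


lemma pair_eq_iff:
  assumes "i \<in> N" "j \<in> N" "i' \<in> N" "j' \<in> N"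
  shows "\<langle>i,j\<rangle> = \<langle>i',j'\<rangle> \<longleftrightarrow> i = i' \<and> j = j'"
proof
  assume eq: "\<langle>i,j\<rangle> = \<langle>i',j'\<rangle>"
  then have "i \<oplus> j = i' \<oplus> j'"
    using less_linear[of "i \<oplus> j" "i' \<oplus> j'"] pair_less_pair[of i j i' j'] pair_less_pair[of i' j' i j]
      less_irrefl[of "\<langle>i,j\<rangle>"] assms by auto
  moreover from this have "i = i'"
    using eq add_cancel_left assms unfolding pairM_def by simp
  ultimately show "i = i' \<and> j = j'"
    using add_cancel_left assms by simp
qed simp

lemma num_in [simp]: "numM M k \<in> N"
  by (induct k) auto

lemma num_less_num: "j < k \<Longrightarrow> numM M j \<prec> numM M k"
proof (induct k)
  case (Suc k)
  then show ?case
    using less_succ_iff[of "numM M j" "numM M k"] by (auto simp: less_Suc_eq)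
qed simp

lemma num_eq_iff: "numM M j = numM M k \<longleftrightarrow> j = k"
  by (metis less_irrefl num_in num_less_num nat_neq_iff)

lemma less_num_iff: "c \<in> N \<Longrightarrow> c \<prec> numM M k \<longleftrightarrow> (\<exists>j<k. c = numM M j)"
  by (induct k) (auto simp: less_succ_iff not_less_zero less_Suc_eq)

lemma less_num2_iff: "c \<in> N \<Longrightarrow> c \<prec> numM M 2 \<longleftrightarrow> c \<in> {numM M 0, numM M 1}"
  by (simp del: numM.simps add: less_num_iff numeral_eq_Suc less_Suc_eq conj_disj_distribR ex_disj_distrib)

lemma less_num4_iff:
  "c \<in> N \<Longrightarrow> c \<prec> numM M 4 \<longleftrightarrow> c \<in> {numM M 0, numM M 1, numM M 2, numM M 3}"
  by (simp del: numM.simps add: less_num_iff numeral_eq_Suc less_Suc_eq conj_disj_distribR ex_disj_distrib)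

lemma cross_mult_rearrange:
  assumes "a \<in> N" "b \<in> N" "c \<in> N" "a' \<in> N" "b' \<in> N" "c' \<in> N" "a'' \<in> N" "b'' \<in> N" "c'' \<in> N"
  shows "(a \<otimes> c' \<oplus> b' \<otimes> c) \<otimes> c'' \<oplus> (a' \<otimes> c'' \<oplus> b'' \<otimes> c') \<otimes> c
       = (a \<otimes> c'' \<oplus> b'' \<otimes> c) \<otimes> c' \<oplus> (a' \<oplus> b') \<otimes> (c \<otimes> c'')"
    and "(a' \<otimes> c \<oplus> b \<otimes> c') \<otimes> c'' \<oplus> (a'' \<otimes> c' \<oplus> b' \<otimes> c'') \<otimes> c
       = (a'' \<otimes> c \<oplus> b \<otimes> c'') \<otimes> c' \<oplus> (a' \<oplus> b') \<otimes> (c \<otimes> c'')"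
  using assms by (simp_all add: distrib_left distrib_right mul_assoc add_assoc
      mul_commute mul_left_commute add_commute add_left_commute)

lemma cross_mult_less_trans:
  assumes N: "a \<in> N" "b \<in> N" "c \<in> N" "a' \<in> N" "b' \<in> N" "c' \<in> N" "a'' \<in> N" "b'' \<in> N" "c'' \<in> N"
    and pos: "\<zero> \<prec> c" "\<zero> \<prec> c'" "\<zero> \<prec> c''"
    and "a \<otimes> c' \<oplus> b' \<otimes> c \<prec> a' \<otimes> c \<oplus> b \<otimes> c'"
    and "a' \<otimes> c'' \<oplus> b'' \<otimes> c' \<prec> a'' \<otimes> c' \<oplus> b' \<otimes> c''"
  shows "a \<otimes> c'' \<oplus> b'' \<otimes> c \<prec> a'' \<otimes> c \<oplus> b \<otimes> c''"
proof -
  have "(a \<otimes> c' \<oplus> b' \<otimes> c) \<otimes> c'' \<oplus> (a' \<otimes> c'' \<oplus> b'' \<otimes> c') \<otimes> c \<prec>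
      (a' \<otimes> c \<oplus> b \<otimes> c') \<otimes> c'' \<oplus> (a'' \<otimes> c' \<oplus> b' \<otimes> c'') \<otimes> c"
    using add_le_less_mono mul_less_mono assms by simp
  then have "(a \<otimes> c'' \<oplus> b'' \<otimes> c) \<otimes> c' \<oplus> (a' \<oplus> b') \<otimes> (c \<otimes> c'') \<prec>
      (a'' \<otimes> c \<oplus> b \<otimes> c'') \<otimes> c' \<oplus> (a' \<oplus> b') \<otimes> (c \<otimes> c'')"
    using cross_mult_rearrange[OF N] by simp
  then show ?thesis
    using add_less_cancel mul_less_cancel N pos by simp
qed

lemma cross_mult_not_less_trans:
  assumes N: "a \<in> N" "b \<in> N" "c \<in> N" "a' \<in> N" "b' \<in> N" "c' \<in> N" "a'' \<in> N" "b'' \<in> N" "c'' \<in> N"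
    and pos: "\<zero> \<prec> c" "\<zero> \<prec> c'" "\<zero> \<prec> c''"
    and "\<not> a \<otimes> c' \<oplus> b' \<otimes> c \<prec> a' \<otimes> c \<oplus> b \<otimes> c'"
    and "\<not> a' \<otimes> c'' \<oplus> b'' \<otimes> c' \<prec> a'' \<otimes> c' \<oplus> b' \<otimes> c''"
  shows "\<not> a \<otimes> c'' \<oplus> b'' \<otimes> c \<prec> a'' \<otimes> c \<oplus> b \<otimes> c''"
proof -
  have "(a' \<otimes> c \<oplus> b \<otimes> c') \<otimes> c'' \<oplus> (a'' \<otimes> c' \<oplus> b' \<otimes> c'') \<otimes> c \<preceq>
      (a \<otimes> c' \<oplus> b' \<otimes> c) \<otimes> c'' \<oplus> (a' \<otimes> c'' \<oplus> b'' \<otimes> c') \<otimes> c"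
    using add_le_mono mul_le_mono not_less assms by simp
  then have "(a'' \<otimes> c \<oplus> b \<otimes> c'') \<otimes> c' \<oplus> (a' \<oplus> b') \<otimes> (c \<otimes> c'') \<preceq>
      (a \<otimes> c'' \<oplus> b'' \<otimes> c) \<otimes> c' \<oplus> (a' \<oplus> b') \<otimes> (c \<otimes> c'')"
    using cross_mult_rearrange[OF N] by simp
  then show ?thesis
    using add_less_cancel add_cancel mul_le_cancel not_less N pos by simp
qed

lemma QM_in_N: "x \<in> QM M \<Longrightarrow> x \<in> N"
  unfolding QM_def by blast

lemma QM_obtain:
  assumes "x \<in> QM M"
  obtains a b c where "a \<in> N" "b \<in> N" "c \<in> N" "x = \<langle>\<langle>a,b\<rangle>,c\<rangle>" "\<zero> \<prec> c"
  using assms unfolding QM_def by blast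

lemma qltM_code:
  assumes "a \<in> N" "b \<in> N" "c \<in> N" "a' \<in> N" "b' \<in> N" "c' \<in> N"
  shows "qltM M \<langle>\<langle>a,b\<rangle>,c\<rangle> \<langle>\<langle>a',b'\<rangle>,c'\<rangle> \<longleftrightarrow> a \<otimes> c' \<oplus> b' \<otimes> c \<prec> a' \<otimes> c \<oplus> b \<otimes> c'"
  unfolding qltM_def using assms by (auto simp: pair_eq_iff)

lemma qltM_irrefl: "x \<in> QM M \<Longrightarrow> \<not> qltM M x x"
  by (elim QM_obtain) (simp add: qltM_code less_irrefl)

lemma qltM_trans:
  assumes "x \<in> QM M" "y \<in> QM M" "z \<in> QM M" "qltM M x y" "qltM M y z"
  shows "qltM M x z"
  using assms(1-3)
proof (elim QM_obtain)
  fix a b c a' b' c' a'' b'' c''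
  assume "a \<in> N" "b \<in> N" "c \<in> N" "x = \<langle>\<langle>a,b\<rangle>,c\<rangle>" "\<zero> \<prec> c"
    "a' \<in> N" "b' \<in> N" "c' \<in> N" "y = \<langle>\<langle>a',b'\<rangle>,c'\<rangle>" "\<zero> \<prec> c'"
    "a'' \<in> N" "b'' \<in> N" "c'' \<in> N" "z = \<langle>\<langle>a'',b''\<rangle>,c''\<rangle>" "\<zero> \<prec> c''"
  then show ?thesis
    using assms(4,5) cross_mult_less_trans[of a b c a' b' c' a'' b'' c''] by (simp add: qltM_code)
qed

lemma qltM_cotrans:
  assumes "x \<in> QM M" "y \<in> QM M" "z \<in> QM M" "qltM M x z"
  shows "qltM M x y \<or> qltM M y z"
  using assms(1-3)
proof (elim QM_obtain)
  fix a b c a' b' c' a'' b'' c''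
  assume "a \<in> N" "b \<in> N" "c \<in> N" "x = \<langle>\<langle>a,b\<rangle>,c\<rangle>" "\<zero> \<prec> c"
    "a' \<in> N" "b' \<in> N" "c' \<in> N" "y = \<langle>\<langle>a',b'\<rangle>,c'\<rangle>" "\<zero> \<prec> c'"
    "a'' \<in> N" "b'' \<in> N" "c'' \<in> N" "z = \<langle>\<langle>a'',b''\<rangle>,c''\<rangle>" "\<zero> \<prec> c''"
  then show ?thesis
    using assms(4) cross_mult_not_less_trans[of a b c a' b' c' a'' b'' c''] by (auto simp: qltM_code)
qed

end

definition pair_tm :: "tm \<Rightarrow> tm \<Rightarrow> tm" where
  "pair_tm s t = Pl (Ti (Pl s t) (Pl s t)) s"

lemma evt_pair_tm [simp]: "evt M v (pair_tm s t) = pairM M (evt M v s) (evt M v t)"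
  by (simp add: pair_tm_def pairM_def)

lemma vars_pair_tm [simp]: "vars_tm (pair_tm s t) = vars_tm s \<union> vars_tm t"
  by (auto simp: pair_tm_def)

(* The components of a code are bounded by the code (le_triple), so bounded quantifiers suffice. *)
definition qlt_fm :: fm where
  "qlt_fm =
    BEx 4 (Pl (V 2) Ot) (BEx 5 (Pl (V 2) Ot) (BEx 6 (Pl (V 2) Ot)
    (BEx 7 (Pl (V 3) Ot) (BEx 8 (Pl (V 3) Ot) (BEx 9 (Pl (V 3) Ot)
      (Conj (Eq (V 2) (pair_tm (pair_tm (V 4) (V 5)) (V 6)))
      (Conj (Eq (V 3) (pair_tm (pair_tm (V 7) (V 8)) (V 9)))
        (Lt (Pl (Ti (V 4) (V 9)) (Ti (V 8) (V 6))) (Pl (Ti (V 7) (V 6)) (Ti (V 5) (V 9)))))))))))"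

lemma bounded_qlt_fm [simp]: "bounded qlt_fm"
  by (simp add: qlt_fm_def)

context rca0_model
begin

lemma sat_qlt_fm:
  assumes "v 2 \<in> N" "v 3 \<in> N"
  shows "sat M v w qlt_fm \<longleftrightarrow> qltM M (v 2) (v 3)"
proof
  assume "sat M v w qlt_fm"
  then show "qltM M (v 2) (v 3)"
    unfolding qlt_fm_def qltM_def by auto blast
next
  assume "qltM M (v 2) (v 3)"
  then obtain a b c a' b' c' where N: "a \<in> N" "b \<in> N" "c \<in> N" "a' \<in> N" "b' \<in> N" "c' \<in> N"
    and codes: "v 2 = \<langle>\<langle>a,b\<rangle>,c\<rangle>" "v 3 = \<langle>\<langle>a',b'\<rangle>,c'\<rangle>"
    and "a \<otimes> c' \<oplus> b' \<otimes> c \<prec> a' \<otimes> c \<oplus> b \<otimes> c'"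
    unfolding qltM_def by blast
  moreover have "a \<prec> v 2 \<oplus> \<one>" "b \<prec> v 2 \<oplus> \<one>" "c \<prec> v 2 \<oplus> \<one>"
    "a' \<prec> v 3 \<oplus> \<one>" "b' \<prec> v 3 \<oplus> \<one>" "c' \<prec> v 3 \<oplus> \<one>"
    using le_triple N codes assms less_succ_iff by auto
  ultimately show "sat M v w qlt_fm"
    unfolding qlt_fm_def by simp blast
qed

section \<open>Strict orders coded by sets\<close>

abbreviation rel_of :: "'a set \<Rightarrow> 'a \<Rightarrow> 'a \<Rightarrow> bool" where
  "rel_of L x y \<equiv> \<langle>x,y\<rangle> \<in> L"

lemma exists_maximal:
  assumes L: "L \<in> S" and Y: "Y \<in> S" "y0 \<in> Y" and b: "b \<in> N" "\<forall>y\<in>Y. y \<prec> b"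
    and irrefl: "irreflp_on Y (rel_of L)" and trans: "transp_on Y (rel_of L)"
  shows "\<exists>m\<in>Y. \<forall>z\<in>Y. \<not> rel_of L m z"
proof -
  have YN: "Y \<subseteq> N"
    using sets_subset Y by blast
  \<comment> \<open>variable 1 is the witness y, so this is a genuine Sigma01 induction\<close>
  have "\<exists>y\<in>N. y \<in> Y \<and> (\<forall>z\<in>N. z \<prec> b \<longrightarrow> z \<notin> Y \<or> \<not> rel_of L y z)"
    using b(1)
  proof (induct b rule: sigma_induct[where
        q="Conj (In (V 1) 0) (BAll 2 (V 0) (Disj (Neg (In (V 2) 0)) (Neg (In (pair_tm (V 1) (V 2)) 1))))"
        and v="\<lambda>_. \<zero>" and w="(\<lambda>_. Y)(1 := L)" and i=0 and k=1])
    case (succ n)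
    then obtain y where y: "y \<in> N" "y \<in> Y" "\<forall>z\<in>N. z \<prec> n \<longrightarrow> z \<notin> Y \<or> \<not> rel_of L y z"
      by blast
    show ?case
    proof (cases "n \<in> Y \<and> rel_of L y n")
      case True
      have "z \<notin> Y \<or> \<not> rel_of L n z" if "z \<in> N" "z \<prec> n \<oplus> \<one>" for z
      proof -
        have "z \<prec> n \<or> z = n"
          using that less_succ_iff succ.hyps by blast
        then show ?thesis
          using y True irreflp_onD[OF irrefl] transp_onD[OF trans] that by blast
      qed
      then show ?thesis
        using True succ.hyps by blast
    next
      case False
      then have "\<forall>z\<in>N. z \<prec> n \<oplus> \<one> \<longrightarrow> z \<notin> Y \<or> \<not> rel_of L y z"
        using y succ.hyps less_succ_iff by blast
      then show ?thesis
        using y by blast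
    qed
  next
    case zero
    then show ?case
      using Y YN not_less_zero by blast
  qed (use L Y in simp_all)
  then show ?thesis
    using b YN by blast
qed

lemma no_maximal_imp_unbounded:
  assumes L: "L \<in> S" and Y: "Y \<in> S" "y0 \<in> Y"
    and irrefl: "irreflp_on Y (rel_of L)" and trans: "transp_on Y (rel_of L)"
    and no_max: "\<forall>y\<in>Y. \<exists>z\<in>Y. rel_of L y z"
  shows "infiniteM M Y"
  unfolding infiniteM_def
proof
  fix n assume n: "n \<in> N"
  show "\<exists>y\<in>Y. n \<prec> y"
  proof (rule ccontr)
    assume "\<not> (\<exists>y\<in>Y. n \<prec> y)"
    then have "\<forall>y\<in>Y. y \<prec> n \<oplus> \<one>"
      using n sets_subset[OF Y(1)] not_less less_succ_iff by blast
    then have "\<exists>m\<in>Y. \<forall>z\<in>Y. \<not> rel_of L m z"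
      using exists_maximal[OF L Y _ _ irrefl trans, of "n \<oplus> \<one>"] n by simp
    then show False
      using no_max by blast
  qed
qed

lemma exists_least:
  assumes Y: "Y \<in> S" "y0 \<in> Y"
  shows "\<exists>y\<in>Y. \<forall>z\<in>Y. \<not> z \<prec> y"
proof (rule ccontr)
  assume no_least: "\<not> ?thesis"
  have YN: "Y \<subseteq> N"
    using sets_subset Y by blast
  have below_outside: "\<forall>k\<in>N. k \<prec> n \<longrightarrow> k \<notin> Y" if "n \<in> N" for n
    using that
  proof (induct n rule: bounded_induct[where q="BAll 2 (V 0) (Neg (In (V 2) 0))"
        and v="\<lambda>_. \<zero>" and w="\<lambda>_. Y" and i=0 and k=1])
    case (succ n)
    have "n \<notin> Y"
    proof
      assume "n \<in> Y"
      then obtain z where "z \<in> Y" "z \<prec> n"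
        using no_least by blast
      then show False
        using succ(2) YN by blast
    qed
    show ?case
    proof (intro ballI impI)
      fix k assume k: "k \<in> N" "k \<prec> n \<oplus> \<one>"
      then have "k \<prec> n \<or> k = n"
        using less_succ_iff succ(1) by blast
      then show "k \<notin> Y"
        using succ(2) \<open>n \<notin> Y\<close> k(1) by blast
    qed
  next
    case zero
    show ?case
      using not_less_zero by blast
  qed (use Y in simp_all)
  have "y0 \<in> N"
    using Y YN by blast
  then show False
    using below_outside[of "y0 \<oplus> \<one>"] less_succ[of y0] Y(2) by simp
qed

lemma section_in: "L \<in> S \<Longrightarrow> X \<in> S \<Longrightarrow> m \<in> N \<Longrightarrow> {y \<in> N. y \<in> X \<and> rel_of L m y} \<in> S"
  by (rule bounded_comprehension[where q="Conj (In (V 0) 0) (In (pair_tm (V 2) (V 0)) 1)"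
        and v="(\<lambda>_. \<zero>)(2 := m)" and w="(\<lambda>_. X)(1 := L)" and i=0 and k=1]) auto

lemma exists_successor_above:
  assumes L: "L \<in> S" and X: "X \<in> S" "x \<in> X"
    and irrefl: "irreflp_on X (rel_of L)" and trans: "transp_on X (rel_of L)"
    and no_max: "\<forall>y\<in>X. \<exists>z\<in>X. rel_of L y z" and n: "n \<in> N"
  shows "\<exists>y\<in>X. rel_of L x y \<and> n \<prec> y"
proof -
  define Y where "Y = {y \<in> N. y \<in> X \<and> rel_of L x y}"
  have YX: "Y \<subseteq> X" and XN: "X \<subseteq> N"
    using sets_subset X unfolding Y_def by auto
  have "Y \<in> S"
    unfolding Y_def using section_in L X XN by blast
  moreover obtain y0 where "y0 \<in> Y"
    using no_max X XN unfolding Y_def by blast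
  moreover have "\<forall>y\<in>Y. \<exists>z\<in>Y. rel_of L y z"
    using no_max transp_onD[OF trans] X XN unfolding Y_def by blast
  ultimately have "infiniteM M Y"
    using no_maximal_imp_unbounded L irreflp_on_subset[OF irrefl YX] transp_on_subset[OF trans YX]
    by blast
  then show ?thesis
    using n unfolding infiniteM_def Y_def by blast
qed

definition records :: "'a set \<Rightarrow> 'a set \<Rightarrow> 'a set" where
  "records L X = {y \<in> N. y \<in> X \<and> (\<forall>z\<in>N. z \<prec> y \<longrightarrow> z \<notin> X \<or> rel_of L z y)}"

lemma records_in: "L \<in> S \<Longrightarrow> X \<in> S \<Longrightarrow> records L X \<in> S"
  unfolding records_def
  by (rule bounded_comprehension[where
        q="Conj (In (V 0) 0) (BAll 2 (V 0) (Disj (Neg (In (V 2) 0)) (In (pair_tm (V 2) (V 0)) 1)))"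
        and v="\<lambda>_. \<zero>" and w="(\<lambda>_. X)(1 := L)" and i=0 and k=1]) auto

lemma records_subset: "records L X \<subseteq> X"
  unfolding records_def by blast

lemma rel_of_records_imp_less:
  assumes irrefl: "irreflp_on X (rel_of L)" and trans: "transp_on X (rel_of L)"
    and y: "y \<in> records L X" "y' \<in> records L X" "rel_of L y y'"
  shows "y \<prec> y'"
proof (rule ccontr)
  have N: "y \<in> N" "y' \<in> N" "y \<in> X" "y' \<in> X"
    using y unfolding records_def by auto
  assume "\<not> y \<prec> y'"
  then consider "y' \<prec> y" | "y' = y"
    using not_less[of y y'] N by blast
  then have "rel_of L y y"
  proof cases
    case 1
    then have "rel_of L y' y"
      using y(1) N unfolding records_def by blast
    then show ?thesis
      using transp_onD[OF trans] y(3) N by blast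
  qed (use y(3) in simp)
  then show False
    using irreflp_onD[OF irrefl] N by blast
qed

lemma exists_record_successor:
  assumes L: "L \<in> S" and X: "X \<in> S" and m: "m \<in> X"
    and cotrans: "\<forall>x\<in>X. \<forall>y\<in>X. \<forall>z\<in>X. rel_of L x z \<longrightarrow> rel_of L x y \<or> rel_of L y z"
    and no_max: "\<forall>y\<in>X. \<exists>z\<in>X. rel_of L y z"
  shows "\<exists>y\<in>records L X. rel_of L m y"
proof -
  have XN: "X \<subseteq> N"
    using sets_subset X by blast
  define Z where "Z = {z \<in> N. z \<in> X \<and> rel_of L m z}"
  have "Z \<in> S"
    unfolding Z_def using section_in L X m XN by blast
  obtain z0 where "z0 \<in> X" "rel_of L m z0"
    using no_max m by blast
  then have "z0 \<in> Z"
    unfolding Z_def using XN by blast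
  then obtain y where "y \<in> Z" and y_least: "\<forall>z\<in>Z. \<not> z \<prec> y"
    using exists_least \<open>Z \<in> S\<close> by blast
  then have y: "y \<in> N" "y \<in> X" "rel_of L m y"
    unfolding Z_def by auto
  have "rel_of L z y" if "z \<in> X" "z \<prec> y" for z
  proof -
    have "\<not> rel_of L m z"
      using y_least that XN unfolding Z_def by blast
    then show ?thesis
      using cotrans m y(2,3) that(1) by blast
  qed
  then have "y \<in> records L X"
    unfolding records_def using y by blast
  then show ?thesis
    using y by blast
qed

lemma exists_record_above:
  assumes L: "L \<in> S" and X: "X \<in> S" "x0 \<in> X"
    and irrefl: "irreflp_on X (rel_of L)" and trans: "transp_on X (rel_of L)"
    and cotrans: "\<forall>x\<in>X. \<forall>y\<in>X. \<forall>z\<in>X. rel_of L x z \<longrightarrow> rel_of L x y \<or> rel_of L y z"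
    and no_max: "\<forall>y\<in>X. \<exists>z\<in>X. rel_of L y z" and n: "n \<in> N"
  shows "\<exists>y\<in>records L X. n \<prec> y"
proof -
  have XN: "X \<subseteq> N"
    using sets_subset X by blast
  define Y where "Y = {z \<in> N. z \<in> X \<and> z \<prec> n \<oplus> \<one>}"
  have Y_in: "Y \<in> S"
    unfolding Y_def
    by (rule bounded_comprehension[where q="Conj (In (V 0) 0) (Lt (V 0) (Pl (V 2) Ot))"
          and v="(\<lambda>_. \<zero>)(2 := n)" and w="\<lambda>_. X" and i=0 and k=1]) (use X n in auto)
  have YX: "Y \<subseteq> X"
    unfolding Y_def by blast
  have above: "n \<prec> y" if "y \<in> X" "y \<notin> Y" for y
  proof -
    have "y \<in> N" "\<not> y \<prec> n \<oplus> \<one>"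
      using that XN unfolding Y_def by auto
    then show ?thesis
      using not_less[of y "n \<oplus> \<one>"] less_iff_succ_le[of n y] n by simp
  qed
  show ?thesis
  proof (cases "Y = {}")
    case True
    obtain y where y: "y \<in> X" "\<forall>z\<in>X. \<not> z \<prec> y"
      using exists_least X by blast
    then have "y \<in> records L X"
      using XN unfolding records_def by blast
    then show ?thesis
      using above y True by blast
  next
    case False
    then obtain y1 where "y1 \<in> Y" by blast
    moreover have "\<forall>y\<in>Y. y \<prec> n \<oplus> \<one>"
      unfolding Y_def by blast
    ultimately obtain m where m: "m \<in> Y" "\<forall>z\<in>Y. \<not> rel_of L m z"
      using exists_maximal[OF L Y_in _ _ _ irreflp_on_subset[OF irrefl YX] transp_on_subset[OF trans YX]] n
      by (meson add_in one_in)
    \<comment> \<open>a record L-above the L-largest element of Y is outside Y, by maximality\<close>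
    then obtain y where y: "y \<in> records L X" "rel_of L m y"
      using exists_record_successor[OF L X(1) _ cotrans no_max] YX by blast
    then have "y \<notin> Y"
      using m by blast
    then show ?thesis
      using above y records_subset by blast
  qed
qed

section \<open>Dense sets of rationals\<close>

definition qlt_pairs :: "'a set" where
  "qlt_pairs = {n \<in> N. \<exists>y\<in>N. \<exists>z\<in>N. n = \<langle>y,z\<rangle> \<and> qltM M y z}"

definition qgt_pairs :: "'a set" where
  "qgt_pairs = {n \<in> N. \<exists>y\<in>N. \<exists>z\<in>N. n = \<langle>y,z\<rangle> \<and> \<langle>z,y\<rangle> \<in> qlt_pairs}"

lemma qlt_pairs_in: "qlt_pairs \<in> S"
  unfolding qlt_pairs_def
proof (rule bounded_comprehension[where
      q="BEx 2 (Pl (V 0) Ot) (BEx 3 (Pl (V 0) Ot) (Conj (Eq (V 0) (pair_tm (V 2) (V 3))) qlt_fm))"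
      and v="\<lambda>_. \<zero>" and w="\<lambda>_. A0" and i=0 and k=1])
  fix n a assume "n \<in> N" "a \<in> N"
  then show "sat M ((\<lambda>_. \<zero>)(0 := n, 1 := a)) (\<lambda>_. A0)
      (BEx 2 (Pl (V 0) Ot) (BEx 3 (Pl (V 0) Ot) (Conj (Eq (V 0) (pair_tm (V 2) (V 3))) qlt_fm)))
    \<longleftrightarrow> (\<exists>y\<in>N. \<exists>z\<in>N. n = \<langle>y,z\<rangle> \<and> qltM M y z)"
    using pair_components_less by (auto simp: sat_qlt_fm)
qed (auto simp: A0_in)

lemma qgt_pairs_in: "qgt_pairs \<in> S"
  unfolding qgt_pairs_def
proof (rule bounded_comprehension[where
      q="BEx 2 (Pl (V 0) Ot) (BEx 3 (Pl (V 0) Ot)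
           (Conj (Eq (V 0) (pair_tm (V 2) (V 3))) (In (pair_tm (V 3) (V 2)) 0)))"
      and v="\<lambda>_. \<zero>" and w="\<lambda>_. qlt_pairs" and i=0 and k=1])
  fix n a assume "n \<in> N" "a \<in> N"
  then show "sat M ((\<lambda>_. \<zero>)(0 := n, 1 := a)) (\<lambda>_. qlt_pairs)
      (BEx 2 (Pl (V 0) Ot) (BEx 3 (Pl (V 0) Ot)
        (Conj (Eq (V 0) (pair_tm (V 2) (V 3))) (In (pair_tm (V 3) (V 2)) 0))))
    \<longleftrightarrow> (\<exists>y\<in>N. \<exists>z\<in>N. n = \<langle>y,z\<rangle> \<and> \<langle>z,y\<rangle> \<in> qlt_pairs)"
    using pair_components_less by auto
qed (auto simp: qlt_pairs_in)

lemma rel_of_qlt_pairs: "y \<in> N \<Longrightarrow> z \<in> N \<Longrightarrow> rel_of qlt_pairs y z \<longleftrightarrow> qltM M y z"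
  unfolding qlt_pairs_def by (auto simp: pair_eq_iff)

lemma rel_of_qgt_pairs: "y \<in> N \<Longrightarrow> z \<in> N \<Longrightarrow> rel_of qgt_pairs y z \<longleftrightarrow> qltM M z y"
  unfolding qgt_pairs_def by (auto simp: pair_eq_iff rel_of_qlt_pairs)

lemma qlt_pairs_order:
  assumes "X \<subseteq> QM M"
  shows "irreflp_on X (rel_of qlt_pairs)" "transp_on X (rel_of qlt_pairs)"
    and "\<forall>x\<in>X. \<forall>y\<in>X. \<forall>z\<in>X. rel_of qlt_pairs x z \<longrightarrow> rel_of qlt_pairs x y \<or> rel_of qlt_pairs y z"
proof -
  have rel: "rel_of qlt_pairs x y \<longleftrightarrow> qltM M x y" if "x \<in> X" "y \<in> X" for x y
    using rel_of_qlt_pairs QM_in_N assms that by blast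
  show "irreflp_on X (rel_of qlt_pairs)"
    using rel qltM_irrefl assms by (auto simp: irreflp_on_def)
  show "transp_on X (rel_of qlt_pairs)"
  proof (rule transp_onI)
    fix x y z assume "x \<in> X" "y \<in> X" "z \<in> X" "rel_of qlt_pairs x y" "rel_of qlt_pairs y z"
    then show "rel_of qlt_pairs x z"
      using rel qltM_trans assms by blast
  qed
  show "\<forall>x\<in>X. \<forall>y\<in>X. \<forall>z\<in>X. rel_of qlt_pairs x z \<longrightarrow> rel_of qlt_pairs x y \<or> rel_of qlt_pairs y z"
    using rel qltM_cotrans assms by blast
qed

lemma qgt_pairs_order:
  assumes "X \<subseteq> QM M"
  shows "irreflp_on X (rel_of qgt_pairs)" "transp_on X (rel_of qgt_pairs)"
    and "\<forall>x\<in>X. \<forall>y\<in>X. \<forall>z\<in>X. rel_of qgt_pairs x z \<longrightarrow> rel_of qgt_pairs x y \<or> rel_of qgt_pairs y z"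
proof -
  have rel: "rel_of qgt_pairs x y \<longleftrightarrow> qltM M y x" if "x \<in> X" "y \<in> X" for x y
    using rel_of_qgt_pairs QM_in_N assms that by blast
  show "irreflp_on X (rel_of qgt_pairs)"
    using rel qltM_irrefl assms by (auto simp: irreflp_on_def)
  show "transp_on X (rel_of qgt_pairs)"
  proof (rule transp_onI)
    fix x y z assume "x \<in> X" "y \<in> X" "z \<in> X" "rel_of qgt_pairs x y" "rel_of qgt_pairs y z"
    then show "rel_of qgt_pairs x z"
      using rel qltM_trans assms by blast
  qed
  show "\<forall>x\<in>X. \<forall>y\<in>X. \<forall>z\<in>X. rel_of qgt_pairs x z \<longrightarrow> rel_of qgt_pairs x y \<or> rel_of qgt_pairs y z"
    using rel qltM_cotrans assms by blast
qed

lemma dloM_no_max_qlt_pairs: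
  assumes "X \<subseteq> QM M" "dloM M X"
  shows "\<forall>y\<in>X. \<exists>z\<in>X. rel_of qlt_pairs y z"
proof
  fix y assume "y \<in> X"
  then obtain z where "z \<in> X" "qltM M y z"
    using assms(2) unfolding dloM_def by blast
  then show "\<exists>z\<in>X. rel_of qlt_pairs y z"
    using rel_of_qlt_pairs QM_in_N assms(1) \<open>y \<in> X\<close> by blast
qed

lemma dloM_no_max_qgt_pairs:
  assumes "X \<subseteq> QM M" "dloM M X"
  shows "\<forall>y\<in>X. \<exists>z\<in>X. rel_of qgt_pairs y z"
proof
  fix y assume "y \<in> X"
  then obtain z where "z \<in> X" "qltM M z y"
    using assms(2) unfolding dloM_def by blast
  then show "\<exists>z\<in>X. rel_of qgt_pairs y z"
    using rel_of_qgt_pairs QM_in_N assms(1) \<open>y \<in> X\<close> by blast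
qed

lemma dense_exists_agreeing:
  assumes X: "X \<in> S" "X \<subseteq> QM M" "dloM M X" and x: "x \<in> X"
  shows "\<exists>y\<in>X. qltM M x y \<and> x \<prec> y"
proof -
  have XN: "X \<subseteq> N"
    using X(2) QM_in_N by blast
  obtain y where "y \<in> X" "rel_of qlt_pairs x y" "x \<prec> y"
    using exists_successor_above[OF qlt_pairs_in X(1) x qlt_pairs_order(1,2)[OF X(2)]
        dloM_no_max_qlt_pairs[OF X(2,3)], of x] x XN by blast
  then show ?thesis
    using rel_of_qlt_pairs x XN by blast
qed

lemma dense_exists_disagreeing:
  assumes X: "X \<in> S" "X \<subseteq> QM M" "dloM M X" and x: "x \<in> X"
  shows "\<exists>y\<in>X. qltM M y x \<and> x \<prec> y"
proof -
  have XN: "X \<subseteq> N"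
    using X(2) QM_in_N by blast
  obtain y where "y \<in> X" "rel_of qgt_pairs x y" "x \<prec> y"
    using exists_successor_above[OF qgt_pairs_in X(1) x qgt_pairs_order(1,2)[OF X(2)]
        dloM_no_max_qgt_pairs[OF X(2,3)], of x] x XN by blast
  then show ?thesis
    using rel_of_qgt_pairs x XN by blast
qed

lemma dense_exists_increasing_subset:
  assumes X: "X \<in> S" "X \<subseteq> QM M" "dloM M X"
  shows "\<exists>T\<in>S. T \<subseteq> X \<and> infiniteM M T \<and> (\<forall>x\<in>T. \<forall>y\<in>T. qltM M x y \<longrightarrow> x \<prec> y)"
proof (intro bexI conjI)
  let ?T = "records qlt_pairs X"
  obtain x0 where "x0 \<in> X"
    using X(3) unfolding dloM_def by blast
  then show "infiniteM M ?T"
    using exists_record_above[OF qlt_pairs_in X(1) _ qlt_pairs_order[OF X(2)] dloM_no_max_qlt_pairs[OF X(2,3)]]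
    unfolding infiniteM_def by blast
  have "rel_of qlt_pairs x y" if "x \<in> ?T" "y \<in> ?T" "qltM M x y" for x y
    using that records_subset X(2) rel_of_qlt_pairs QM_in_N by blast
  then show "\<forall>x\<in>?T. \<forall>y\<in>?T. qltM M x y \<longrightarrow> x \<prec> y"
    using rel_of_records_imp_less[OF qlt_pairs_order(1,2)[OF X(2)]] by blast
qed (use records_in[OF qlt_pairs_in X(1)] records_subset in auto)

lemma dense_exists_decreasing_subset:
  assumes X: "X \<in> S" "X \<subseteq> QM M" "dloM M X"
  shows "\<exists>T\<in>S. T \<subseteq> X \<and> infiniteM M T \<and> (\<forall>x\<in>T. \<forall>y\<in>T. qltM M x y \<longrightarrow> y \<prec> x)"
proof (intro bexI conjI)
  let ?T = "records qgt_pairs X"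
  obtain x0 where "x0 \<in> X"
    using X(3) unfolding dloM_def by blast
  then show "infiniteM M ?T"
    using exists_record_above[OF qgt_pairs_in X(1) _ qgt_pairs_order[OF X(2)] dloM_no_max_qgt_pairs[OF X(2,3)]]
    unfolding infiniteM_def by blast
  have "rel_of qgt_pairs y x" if "x \<in> ?T" "y \<in> ?T" "qltM M x y" for x y
    using that records_subset X(2) rel_of_qgt_pairs QM_in_N by blast
  then show "\<forall>x\<in>?T. \<forall>y\<in>?T. qltM M x y \<longrightarrow> y \<prec> x"
    using rel_of_records_imp_less[OF qgt_pairs_order(1,2)[OF X(2)]] by blast
qed (use records_in[OF qgt_pairs_in X(1)] records_subset in auto)

section \<open>From two colours to four\<close>

definition split_colouring :: "'a set \<Rightarrow> 'a set" where
  "split_colouring F = {p \<in> N. \<exists>x\<in>N. \<exists>y\<in>N. \<exists>c\<in>N. p = \<langle>\<langle>x,y\<rangle>,c\<rangle> \<and>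
     ((x \<prec> y \<and> p \<in> F) \<or> (\<not> x \<prec> y \<and> (\<exists>c0\<in>N. c = c0 \<oplus> \<one> \<oplus> \<one> \<and> \<langle>\<langle>x,y\<rangle>,c0\<rangle> \<in> F)))}"

lemma split_colouring_in:
  assumes "F \<in> S"
  shows "split_colouring F \<in> S"
  unfolding split_colouring_def
  by (rule bounded_comprehension[where
        q="BEx 2 (Pl (V 0) Ot) (BEx 3 (Pl (V 0) Ot) (BEx 4 (Pl (V 0) Ot)
          (Conj (Eq (V 0) (pair_tm (pair_tm (V 2) (V 3)) (V 4)))
            (Disj (Conj (Lt (V 2) (V 3)) (In (V 0) 0))
              (Conj (Neg (Lt (V 2) (V 3)))
                (BEx 5 (V 4) (Conj (Eq (V 4) (Pl (Pl (V 5) Ot) Ot))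
                  (In (pair_tm (pair_tm (V 2) (V 3)) (V 5)) 0))))))))"
        and v="\<lambda>_. \<zero>" and w="\<lambda>_. F" and i=0 and k=1])
    (use assms triple_components_less less_add_two in \<open>simp_all, blast\<close>)

lemma split_colouring_iff:
  assumes "x \<in> N" "y \<in> N" "g \<in> N"
  shows "\<langle>\<langle>x,y\<rangle>,g\<rangle> \<in> split_colouring F \<longleftrightarrow>
    (x \<prec> y \<and> \<langle>\<langle>x,y\<rangle>,g\<rangle> \<in> F) \<or> (\<not> x \<prec> y \<and> (\<exists>c0\<in>N. g = c0 \<oplus> \<one> \<oplus> \<one> \<and> \<langle>\<langle>x,y\<rangle>,c0\<rangle> \<in> F))"
  unfolding split_colouring_def using assms by (auto simp: pair_eq_iff)

lemma colouring2_memberD: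
  assumes F: "colouring M 2 F" and N: "x \<in> N" "y \<in> N" "c \<in> N" and "\<langle>\<langle>x,y\<rangle>,c\<rangle> \<in> F"
  shows "x \<in> QM M \<and> y \<in> QM M \<and> qltM M x y \<and> c \<in> {numM M 0, numM M 1}"
proof -
  obtain x' y' c' where xyc': "x' \<in> QM M" "y' \<in> QM M" "c' \<in> N" "qltM M x' y'" "c' \<prec> numM M 2"
    and eq: "\<langle>\<langle>x,y\<rangle>,c\<rangle> = \<langle>\<langle>x',y'\<rangle>,c'\<rangle>"
    using F \<open>\<langle>\<langle>x,y\<rangle>,c\<rangle> \<in> F\<close> unfolding colouring_def by blast
  then have "x = x'" "y = y'" "c = c'"
    using pair_eq_iff QM_in_N N by auto
  then show ?thesis
    using xyc' less_num2_iff by (auto simp del: numM.simps)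
qed

lemma colouring2_total:
  assumes "colouring M 2 F" "x \<in> QM M" "y \<in> QM M" "qltM M x y"
  obtains c where "c \<in> {numM M 0, numM M 1}" "\<langle>\<langle>x,y\<rangle>,c\<rangle> \<in> F"
  using assms less_num2_iff unfolding colouring_def by blast

lemma shifted_colour: "c \<in> {numM M 0, numM M 1} \<Longrightarrow> c \<oplus> \<one> \<oplus> \<one> \<in> {numM M 2, numM M 3}"
  by (auto simp: numeral_eq_Suc)

lemma colour_neq_shifted:
  "c \<in> {numM M 0, numM M 1} \<Longrightarrow> c' \<in> {numM M 0, numM M 1} \<Longrightarrow> c \<noteq> c' \<oplus> \<one> \<oplus> \<one>"
  using shifted_colour[of c'] num_eq_iff by (auto simp del: numM.simps)

lemma split_colouring_range:
  assumes F: "colouring M 2 F" and "p \<in> split_colouring F"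
  shows "\<exists>x\<in>QM M. \<exists>y\<in>QM M. \<exists>c\<in>N. qltM M x y \<and> c \<prec> numM M 4 \<and> p = \<langle>\<langle>x,y\<rangle>,c\<rangle>"
proof -
  obtain x y c where xyc: "x \<in> N" "y \<in> N" "c \<in> N" "p = \<langle>\<langle>x,y\<rangle>,c\<rangle>"
    and "(x \<prec> y \<and> p \<in> F) \<or> (\<not> x \<prec> y \<and> (\<exists>c0\<in>N. c = c0 \<oplus> \<one> \<oplus> \<one> \<and> \<langle>\<langle>x,y\<rangle>,c0\<rangle> \<in> F))"
    using \<open>p \<in> split_colouring F\<close> unfolding split_colouring_def by blast
  then have "x \<in> QM M \<and> y \<in> QM M \<and> qltM M x y \<and> c \<in> {numM M 0, numM M 1, numM M 2, numM M 3}"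
    using colouring2_memberD[OF F] shifted_colour by fastforce
  then show ?thesis
    using xyc less_num4_iff by (auto simp del: numM.simps)
qed

lemma split_colouring_total:
  assumes F: "colouring M 2 F" and xy: "x \<in> QM M" "y \<in> QM M" "qltM M x y"
  shows "\<exists>c\<in>N. c \<prec> numM M 4 \<and> \<langle>\<langle>x,y\<rangle>,c\<rangle> \<in> split_colouring F"
proof -
  obtain c where c: "c \<in> {numM M 0, numM M 1}" "\<langle>\<langle>x,y\<rangle>,c\<rangle> \<in> F"
    using colouring2_total[OF F xy] .
  define g where "g = (if x \<prec> y then c else c \<oplus> \<one> \<oplus> \<one>)"
  have "x \<in> N" "y \<in> N" "c \<in> N"
    using xy c(1) QM_in_N by auto
  then have "g \<in> N" "\<langle>\<langle>x,y\<rangle>,g\<rangle> \<in> split_colouring F"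
    using c(2) split_colouring_iff unfolding g_def by auto
  moreover have "g \<prec> numM M 4"
    using c(1) shifted_colour[OF c(1)] less_num4_iff[OF \<open>g \<in> N\<close>] unfolding g_def
    by (auto simp del: numM.simps)
  ultimately show ?thesis
    by blast
qed

lemma split_colouring_unique:
  assumes F: "colouring M 2 F" and xy: "x \<in> QM M" "y \<in> QM M" and c: "c \<in> N" "c' \<in> N"
    and G: "\<langle>\<langle>x,y\<rangle>,c\<rangle> \<in> split_colouring F" "\<langle>\<langle>x,y\<rangle>,c'\<rangle> \<in> split_colouring F"
  shows "c = c'"
proof -
  have F_unique: "\<forall>c\<in>N. \<forall>c'\<in>N. \<langle>\<langle>x,y\<rangle>,c\<rangle> \<in> F \<longrightarrow> \<langle>\<langle>x,y\<rangle>,c'\<rangle> \<in> F \<longrightarrow> c = c'"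
    using F xy unfolding colouring_def by blast
  have xyN: "x \<in> N" "y \<in> N"
    using xy QM_in_N by auto
  show ?thesis
  proof (cases "x \<prec> y")
    case True
    then show ?thesis
      using G split_colouring_iff xyN c F_unique by auto
  next
    case False
    then obtain c0 c0' where "c0 \<in> N" "c0' \<in> N" "c = c0 \<oplus> \<one> \<oplus> \<one>" "c' = c0' \<oplus> \<one> \<oplus> \<one>"
      "\<langle>\<langle>x,y\<rangle>,c0\<rangle> \<in> F" "\<langle>\<langle>x,y\<rangle>,c0'\<rangle> \<in> F"
      using G split_colouring_iff xyN c by auto
    then show ?thesis
      using F_unique by auto
  qed
qed

lemma colouring_split_colouring:
  assumes F: "colouring M 2 F"
  shows "colouring M 4 (split_colouring F)"
  unfolding colouring_def
proof (intro conjI ballI impI)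
  show "split_colouring F \<in> S"
    using split_colouring_in F unfolding colouring_def by blast
next
  fix p assume "p \<in> split_colouring F"
  then show "\<exists>x\<in>QM M. \<exists>y\<in>QM M. \<exists>c\<in>N. qltM M x y \<and> c \<prec> numM M 4 \<and> p = \<langle>\<langle>x,y\<rangle>,c\<rangle>"
    by (rule split_colouring_range[OF F])
next
  fix x y assume "x \<in> QM M" "y \<in> QM M" "qltM M x y"
  then show "\<exists>c\<in>N. c \<prec> numM M 4 \<and> \<langle>\<langle>x,y\<rangle>,c\<rangle> \<in> split_colouring F"
    by (rule split_colouring_total[OF F])
next
  fix x y c c'
  assume "x \<in> QM M" "y \<in> QM M" "c \<in> N" "c' \<in> N"
    "\<langle>\<langle>x,y\<rangle>,c\<rangle> \<in> split_colouring F" "\<langle>\<langle>x,y\<rangle>,c'\<rangle> \<in> split_colouring F"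
  then show "c = c'"
    by (rule split_colouring_unique[OF F])
qed

lemma split_colour_mem:
  assumes F: "colouring M 2 F" and xy: "x \<in> QM M" "y \<in> QM M"
    and f: "f \<in> {numM M 0, numM M 1}" "\<langle>\<langle>x,y\<rangle>,f\<rangle> \<in> F"
    and c12: "c1 \<in> N" "c2 \<in> N" "\<langle>\<langle>x,y\<rangle>,c1\<rangle> \<in> split_colouring F \<or> \<langle>\<langle>x,y\<rangle>,c2\<rangle> \<in> split_colouring F"
  shows "(if x \<prec> y then f else f \<oplus> \<one> \<oplus> \<one>) \<in> {c1, c2}"
proof -
  define g where "g = (if x \<prec> y then f else f \<oplus> \<one> \<oplus> \<one>)"
  have "x \<in> N" "y \<in> N" "f \<in> N"
    using xy f QM_in_N by auto
  then have "g \<in> N" "\<langle>\<langle>x,y\<rangle>,g\<rangle> \<in> split_colouring F"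
    using f(2) split_colouring_iff unfolding g_def by auto
  then show ?thesis
    using split_colouring_unique[OF F xy] c12 unfolding g_def[symmetric] by blast
qed

lemma colours_by_agreement:
  assumes F: "colouring M 2 F" and X: "X \<subseteq> QM M" and c12: "c1 \<in> N" "c2 \<in> N"
    and two_colours: "\<forall>x\<in>X. \<forall>y\<in>X. qltM M x y \<longrightarrow>
      \<langle>\<langle>x,y\<rangle>,c1\<rangle> \<in> split_colouring F \<or> \<langle>\<langle>x,y\<rangle>,c2\<rangle> \<in> split_colouring F"
    and agree: "xa \<in> X" "ya \<in> X" "qltM M xa ya" "xa \<prec> ya"
    and disagree: "xd \<in> X" "yd \<in> X" "qltM M xd yd" "\<not> xd \<prec> yd"
  obtains fa fd where "fa \<in> {numM M 0, numM M 1}" "fd \<in> {numM M 0, numM M 1}"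
    and "\<forall>x\<in>X. \<forall>y\<in>X. qltM M x y \<longrightarrow> \<langle>\<langle>x,y\<rangle>, if x \<prec> y then fa else fd\<rangle> \<in> F"
proof -
  let ?shift = "\<lambda>c. c \<oplus> \<one> \<oplus> \<one>"
  have split_colour: "(if x \<prec> y then f else ?shift f) \<in> {c1, c2}"
    if "x \<in> X" "y \<in> X" "qltM M x y" "f \<in> {numM M 0, numM M 1}" "\<langle>\<langle>x,y\<rangle>,f\<rangle> \<in> F" for x y f
    using split_colour_mem[OF F _ _ that(4,5) c12] two_colours that X by blast
  obtain fa where fa: "fa \<in> {numM M 0, numM M 1}" "\<langle>\<langle>xa,ya\<rangle>,fa\<rangle> \<in> F"
    using colouring2_total[OF F] agree X by blast
  obtain fd where fd: "fd \<in> {numM M 0, numM M 1}" "\<langle>\<langle>xd,yd\<rangle>,fd\<rangle> \<in> F"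
    using colouring2_total[OF F] disagree X by blast
  \<comment> \<open>the two colours of the split colouring on X are one colour below 2 and one above\<close>
  have colours: "{c1, c2} = {fa, ?shift fd}"
    using split_colour[OF agree(1-3) fa] split_colour[OF disagree(1-3) fd] agree(4) disagree(4)
      colour_neq_shifted[OF fa(1) fd(1)] by auto
  have "\<langle>\<langle>x,y\<rangle>, if x \<prec> y then fa else fd\<rangle> \<in> F" if xy: "x \<in> X" "y \<in> X" "qltM M x y" for x y
  proof -
    obtain f where f: "f \<in> {numM M 0, numM M 1}" "\<langle>\<langle>x,y\<rangle>,f\<rangle> \<in> F"
      using colouring2_total[OF F] xy X by blast
    have g: "(if x \<prec> y then f else ?shift f) \<in> {fa, ?shift fd}"
      using split_colour[OF xy f] colours by simp
    show ?thesis
    proof (cases "x \<prec> y")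
      case True
      then show ?thesis
        using g f colour_neq_shifted[OF f(1) fd(1)] by auto
    next
      case False
      then have "?shift f = ?shift fd"
        using g colour_neq_shifted[OF fa(1) f(1)] by auto
      then have "f = fd"
        using f(1) fd(1) add_cancel by (auto simp del: numM.simps)
      then show ?thesis
        using False f by simp
    qed
  qed
  then show ?thesis
    using that fa(1) fd(1) by blast
qed

lemma dense_infinite_homogeneous_subset:
  assumes X: "X \<in> S" "X \<subseteq> QM M" "dloM M X"
    and colour: "\<forall>x\<in>X. \<forall>y\<in>X. qltM M x y \<longrightarrow> \<langle>\<langle>x,y\<rangle>, if x \<prec> y then fa else fd\<rangle> \<in> F"
    and "fa = c \<or> fd = c"
  shows "\<exists>T\<in>S. T \<subseteq> X \<and> infiniteM M T \<and> homog_col M F T c"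
  using \<open>fa = c \<or> fd = c\<close>
proof
  assume "fa = c"
  obtain T where T: "T \<in> S" "T \<subseteq> X" "infiniteM M T" "\<forall>x\<in>T. \<forall>y\<in>T. qltM M x y \<longrightarrow> x \<prec> y"
    using dense_exists_increasing_subset[OF X] by blast
  then have "homog_col M F T c"
    using colour \<open>fa = c\<close> unfolding homog_col_def by fastforce
  then show ?thesis
    using T by blast
next
  assume "fd = c"
  obtain T where T: "T \<in> S" "T \<subseteq> X" "infiniteM M T" "\<forall>x\<in>T. \<forall>y\<in>T. qltM M x y \<longrightarrow> y \<prec> x"
    using dense_exists_decreasing_subset[OF X] by blast
  have "\<not> x \<prec> y" if "x \<in> T" "y \<in> T" "qltM M x y" for x y
    using T that less_asym QM_in_N X(2) by blast
  then have "homog_col M F T c"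
    using colour \<open>fd = c\<close> T(2) unfolding homog_col_def by fastforce
  then show ?thesis
    using T by blast
qed

lemma ER2_if_DT2_4_2:
  assumes "DT2_4_2 M"
  shows "ER2 M"
  unfolding ER2_def
proof (intro allI impI)
  fix F assume F: "colouring M 2 F"
  obtain X c1 c2 where X: "X \<in> S" "X \<subseteq> QM M" "dloM M X" and c12: "c1 \<in> N" "c2 \<in> N"
    and two_colours: "\<forall>x\<in>X. \<forall>y\<in>X. qltM M x y \<longrightarrow>
      \<langle>\<langle>x,y\<rangle>,c1\<rangle> \<in> split_colouring F \<or> \<langle>\<langle>x,y\<rangle>,c2\<rangle> \<in> split_colouring F"
    using assms[unfolded DT2_4_2_def, rule_format, OF colouring_split_colouring[OF F]] by blast
  obtain x where x: "x \<in> X"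
    using X(3) unfolding dloM_def by blast
  obtain ya where ya: "ya \<in> X" "qltM M x ya" "x \<prec> ya"
    using dense_exists_agreeing[OF X x] by blast
  obtain yd where yd: "yd \<in> X" "qltM M yd x" "\<not> yd \<prec> x"
    using dense_exists_disagreeing[OF X x] less_asym QM_in_N X(2) x by blast
  obtain fa fd where f: "fa \<in> {numM M 0, numM M 1}" "fd \<in> {numM M 0, numM M 1}"
    and colour: "\<forall>x\<in>X. \<forall>y\<in>X. qltM M x y \<longrightarrow> \<langle>\<langle>x,y\<rangle>, if x \<prec> y then fa else fd\<rangle> \<in> F"
    using colours_by_agreement[OF F X(2) c12 two_colours x ya yd(1) x yd(2,3)] .
  show "\<exists>X\<in>S. X \<subseteq> QM M \<and>
      (infiniteM M X \<and> homog_col M F X (numM M 0) \<or> dloM M X \<and> homog_col M F X (numM M 1))"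
  proof (cases "fa = numM M 0 \<or> fd = numM M 0")
    case True
    then obtain T where "T \<in> S" "T \<subseteq> X" "infiniteM M T" "homog_col M F T (numM M 0)"
      using dense_infinite_homogeneous_subset[OF X colour] by blast
    then show ?thesis
      using X(2) by blast
  next
    case False
    then have "fa = numM M 1" "fd = numM M 1"
      using f by auto
    have "homog_col M F X (numM M 1)"
      unfolding homog_col_def
    proof (intro ballI impI)
      fix x y assume "x \<in> X" "y \<in> X" "qltM M x y"
      then show "\<langle>\<langle>x,y\<rangle>,numM M 1\<rangle> \<in> F"
        using colour \<open>fa = numM M 1\<close> \<open>fd = numM M 1\<close> by (cases "x \<prec> y") auto
    qed
    then show ?thesis
      using X by blast
  qed
qed

end

theorem theorem5p44:
  fixes M :: "'a l2"
  assumes "RCA0 M" and "DT2_4_2 M"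
  shows "ER2 M"
proof (cases "s_dom M = {}")
  case True
  then show ?thesis
    by (simp add: ER2_def colouring_def)
next
  case False
  then obtain A0 where "A0 \<in> s_dom M"
    by blast
  then interpret rca0_model M A0
    using assms(1) by unfold_locales
  show ?thesis
    using assms(2) by (rule ER2_if_DT2_4_2)
qed

end
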